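(* If $G$ is a $\chi_\rho$-critical graph, then $G$ is connected.
   Context: Graphs are finite and simple. A $k$-packing coloring of $G$ is a map $c:V(G)\to\{1,\ldots,k\}$ such that two distinct vertices $u,v$ with $c(u)=c(v)=i$ satisfy $d_G(u,v)>i$ (distance between vertices in different components is infinite); $\chi_\rho(G)$ is the smallest $k$ for which such a coloring exists. $G$ is $\chi_\rho$-critical if $\chi_\rho(H)<\chi_\rho(G)$ for every proper subgraph $H$ of $G$. *)

theory Defs
  imports Main "HOL-Library.Extended_Nat"
begin

definition simple_graph :: "'a set \<Rightarrow> 'a set set \<Rightarrow> bool" where
  "simple_graph V E \<longleftrightarrow> finite V \<and>
     (\<forall>e\<in>E. \<exists>u v. u \<in> V \<and> v \<in> V \<and> u \<noteq> v \<and> e = {u, v})"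

definition walk :: "'a set \<Rightarrow> 'a set set \<Rightarrow> 'a list \<Rightarrow> bool" where
  "walk V E xs \<longleftrightarrow> xs \<noteq> [] \<and> set xs \<subseteq> V \<and>
     (\<forall>i. Suc i < length xs \<longrightarrow> {xs ! i, xs ! Suc i} \<in> E)"

text \<open>Graph distance; infinite (\<infinity>) if there is no walk, e.g. between different components.\<close>
definition gdist :: "'a set \<Rightarrow> 'a set set \<Rightarrow> 'a \<Rightarrow> 'a \<Rightarrow> enat" where
  "gdist V E u v = Inf {enat (length xs - 1) | xs. walk V E xs \<and> hd xs = u \<and> last xs = v}"

definition packing_coloring :: "'a set \<Rightarrow> 'a set set \<Rightarrow> nat \<Rightarrow> ('a \<Rightarrow> nat) \<Rightarrow> bool" where
  "packing_coloring V E k c \<longleftrightarrow>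
     (\<forall>v\<in>V. c v \<in> {1..k}) \<and>
     (\<forall>u\<in>V. \<forall>v\<in>V. u \<noteq> v \<and> c u = c v \<longrightarrow> gdist V E u v > enat (c u))"

definition packing_chromatic :: "'a set \<Rightarrow> 'a set set \<Rightarrow> nat" where
  "packing_chromatic V E = (LEAST k. \<exists>c. packing_coloring V E k c)"

definition proper_subgraph :: "'a set \<Rightarrow> 'a set set \<Rightarrow> 'a set \<Rightarrow> 'a set set \<Rightarrow> bool" where
  "proper_subgraph V' E' V E \<longleftrightarrow> simple_graph V' E' \<and> V' \<subseteq> V \<and> E' \<subseteq> E \<and> (V', E') \<noteq> (V, E)"

definition chi_rho_critical :: "'a set \<Rightarrow> 'a set set \<Rightarrow> bool" where
  "chi_rho_critical V E \<longleftrightarrow>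
     (\<forall>V' E'. proper_subgraph V' E' V E \<longrightarrow> packing_chromatic V' E' < packing_chromatic V E)"

definition connected_graph :: "'a set \<Rightarrow> 'a set set \<Rightarrow> bool" where
  "connected_graph V E \<longleftrightarrow>
     (\<forall>u\<in>V. \<forall>v\<in>V. \<exists>xs. walk V E xs \<and> hd xs = u \<and> last xs = v)"

end

theory Submission
  imports Defs
begin

text \<open>If G is disconnected, the vertices reachable from some vertex form a nonempty proper
  set S closed under adjacency, and so is its complement. No walk leaves S or V - S, so
  distances inside the induced subgraphs G[S] and G[V - S] are the distances in G, and
  vertices on different sides are at infinite distance. Hence optimal packing colorings
  of G[S] and G[V - S] glue to a packing coloring of G with
  max (chi_rho(G[S])) (chi_rho(G[V - S])) colors. Both induced subgraphs are proper,
  so criticality makes this maximum smaller than chi_rho(G), a contradiction.\<close>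

definition induced_edges :: "'a set \<Rightarrow> 'a set set \<Rightarrow> 'a set set" where
  "induced_edges S E = {e \<in> E. e \<subseteq> S}"

definition edge_closed :: "'a set \<Rightarrow> 'a set set \<Rightarrow> 'a set \<Rightarrow> bool" where
  "edge_closed V E S \<longleftrightarrow> S \<subseteq> V \<and> (\<forall>a b. a \<in> S \<longrightarrow> {a, b} \<in> E \<longrightarrow> b \<in> S)"

lemma simple_graph_edge_in_vertices:
  assumes "simple_graph V E" "{a, b} \<in> E"
  shows "b \<in> V"
  using assms unfolding simple_graph_def by (metis doubleton_eq_iff)

lemma simple_graph_induced:
  assumes "simple_graph V E" "S \<subseteq> V"
  shows "simple_graph S (induced_edges S E)"
  using assms finite_subset unfolding simple_graph_def induced_edges_def by fastforce

lemma edge_closed_Diff: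
  assumes "simple_graph V E" "edge_closed V E S"
  shows "edge_closed V E (V - S)"
  using assms simple_graph_edge_in_vertices[OF assms(1)]
  unfolding edge_closed_def by (metis Diff_iff Diff_subset insert_commute)

lemma walk_nth_in_edge_closed:
  assumes "edge_closed V E S" "walk V E xs" "hd xs \<in> S" "i < length xs"
  shows "xs ! i \<in> S"
  using assms(4)
proof (induction i)
  case 0
  then show ?case using assms(3) by (simp add: hd_conv_nth)
next
  case (Suc i)
  then have "xs ! i \<in> S" "{xs ! i, xs ! Suc i} \<in> E"
    using assms(2) by (simp_all add: walk_def)
  then show ?case using assms(1) unfolding edge_closed_def by blast
qed

lemma walk_in_edge_closed:
  assumes "edge_closed V E S" "walk V E xs" "hd xs \<in> S"
  shows "set xs \<subseteq> S"
  using walk_nth_in_edge_closed[OF assms] by (auto simp: in_set_conv_nth)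

lemma walk_induced_if_edge_closed:
  assumes "edge_closed V E S" "walk V E xs" "hd xs \<in> S"
  shows "walk S (induced_edges S E) xs"
  using assms walk_nth_in_edge_closed[OF assms] walk_in_edge_closed[OF assms]
  unfolding walk_def induced_edges_def by auto

lemma gdist_induced_le:
  assumes "edge_closed V E S" "u \<in> S"
  shows "gdist S (induced_edges S E) u v \<le> gdist V E u v"
  unfolding gdist_def
  using walk_induced_if_edge_closed[OF assms(1)] assms(2) by (intro Inf_superset_mono) blast

lemma gdist_out_of_edge_closed:
  assumes "edge_closed V E S" "u \<in> S" "v \<notin> S"
  shows "gdist V E u v = \<infinity>"
proof -
  have "last xs \<in> S" if "walk V E xs" "hd xs = u" for xs
    using walk_in_edge_closed[OF assms(1) that(1)] that assms(2)
    by (metis last_in_set subsetD walk_def)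
  then have "{enat (length xs - 1) | xs. walk V E xs \<and> hd xs = u \<and> last xs = v} = {}"
    using assms(3) by blast
  then show ?thesis unfolding gdist_def by (metis Inf_empty top_enat_def)
qed

lemma packing_coloring_mono:
  "packing_coloring V E k c \<Longrightarrow> k \<le> k' \<Longrightarrow> packing_coloring V E k' c"
  unfolding packing_coloring_def by auto

lemma packing_coloring_exists:
  assumes "finite V"
  shows "\<exists>c. packing_coloring V E (card V) c"
proof -
  obtain h where h: "bij_betw h V {0..<card V}"
    using ex_bij_betw_finite_nat[OF assms] by blast
  then have "packing_coloring V E (card V) (\<lambda>x. Suc (h x))"
    unfolding packing_coloring_def bij_betw_def inj_on_def by (auto simp: Suc_le_eq)
  then show ?thesis by blast
qed

lemma packing_coloring_chromatic:
  assumes "finite V"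
  shows "\<exists>c. packing_coloring V E (packing_chromatic V E) c"
proof -
  have "\<exists>k c. packing_coloring V E k c" using packing_coloring_exists[OF assms] by blast
  then show ?thesis unfolding packing_chromatic_def by (rule LeastI_ex)
qed

lemma packing_chromatic_le:
  "packing_coloring V E k c \<Longrightarrow> packing_chromatic V E \<le> k"
  unfolding packing_chromatic_def by (intro Least_le) blast

lemma packing_coloring_induced_restrict:
  assumes "edge_closed V E S" "packing_coloring S (induced_edges S E) k c"
    "u \<in> S" "v \<in> S" "u \<noteq> v" "c u = c v"
  shows "enat (c u) < gdist V E u v"
  using assms gdist_induced_le[OF assms(1,3), of v]
  unfolding packing_coloring_def by (meson order_less_le_trans)

lemma packing_coloring_glue:
  assumes closed: "edge_closed V E S" "edge_closed V E (V - S)"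
    and c1: "packing_coloring S (induced_edges S E) k c1"
    and c2: "packing_coloring (V - S) (induced_edges (V - S) E) k c2"
  shows "packing_coloring V E k (\<lambda>x. if x \<in> S then c1 x else c2 x)"
  unfolding packing_coloring_def
proof (intro conjI ballI impI)
  fix v assume "v \<in> V"
  then show "(if v \<in> S then c1 v else c2 v) \<in> {1..k}"
    using c1 c2 unfolding packing_coloring_def by auto
next
  fix u v assume uv: "u \<in> V" "v \<in> V"
    and same: "u \<noteq> v \<and> (if u \<in> S then c1 u else c2 u) = (if v \<in> S then c1 v else c2 v)"
  consider "u \<in> S" "v \<in> S" | "u \<notin> S" "v \<notin> S" | "u \<in> S" "v \<notin> S" | "u \<notin> S" "v \<in> S"
    by blast
  then show "enat (if u \<in> S then c1 u else c2 u) < gdist V E u v"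
  proof cases
    case 1
    then show ?thesis using packing_coloring_induced_restrict[OF closed(1) c1] same by simp
  next
    case 2
    then show ?thesis using packing_coloring_induced_restrict[OF closed(2) c2] same uv by simp
  next
    case 3
    then show ?thesis using gdist_out_of_edge_closed[OF closed(1)] by simp
  next
    case 4
    then show ?thesis using gdist_out_of_edge_closed[OF closed(2), of u v] uv by simp
  qed
qed

lemma packing_chromatic_split_le:
  assumes "simple_graph V E" "edge_closed V E S"
  shows "packing_chromatic V E \<le>
    max (packing_chromatic S (induced_edges S E)) (packing_chromatic (V - S) (induced_edges (V - S) E))"
    (is "_ \<le> max ?k1 ?k2")
proof -
  have closed: "edge_closed V E (V - S)" using edge_closed_Diff[OF assms] .
  have "finite V" "S \<subseteq> V" using assms unfolding simple_graph_def edge_closed_def by auto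
  then obtain c1 c2 where c1: "packing_coloring S (induced_edges S E) ?k1 c1"
    and c2: "packing_coloring (V - S) (induced_edges (V - S) E) ?k2 c2"
    using packing_coloring_chromatic finite_subset finite_Diff by metis
  have "packing_coloring V E (max ?k1 ?k2) (\<lambda>x. if x \<in> S then c1 x else c2 x)"
    using packing_coloring_mono[OF c1, of "max ?k1 ?k2"] packing_coloring_mono[OF c2, of "max ?k1 ?k2"]
    by (intro packing_coloring_glue[OF assms(2) closed]) simp_all
  then show ?thesis by (rule packing_chromatic_le)
qed

lemma walk_snoc:
  assumes "walk V E xs" "{last xs, b} \<in> E" "b \<in> V"
  shows "walk V E (xs @ [b])"
proof -
  have "xs \<noteq> []" using assms(1) by (simp add: walk_def)
  then have "{(xs @ [b]) ! i, (xs @ [b]) ! Suc i} \<in> E" if "Suc i < length (xs @ [b])" for i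
    using assms(1,2) that
    by (cases "Suc i < length xs")
      (auto simp: walk_def nth_append last_conv_nth less_Suc_eq dest: sym[of "Suc i"])
  then show ?thesis using assms(1,3) by (auto simp: walk_def)
qed

definition reachable :: "'a set \<Rightarrow> 'a set set \<Rightarrow> 'a \<Rightarrow> 'a set" where
  "reachable V E u = {v. \<exists>xs. walk V E xs \<and> hd xs = u \<and> last xs = v}"

lemma edge_closed_reachable:
  assumes "simple_graph V E"
  shows "edge_closed V E (reachable V E u)"
  unfolding edge_closed_def
proof (intro conjI allI impI)
  show "reachable V E u \<subseteq> V"
    unfolding reachable_def walk_def by auto
next
  fix a b assume "a \<in> reachable V E u" "{a, b} \<in> E"
  then obtain xs where xs: "walk V E xs" "hd xs = u" "last xs = a"
    unfolding reachable_def by blast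
  then have "walk V E (xs @ [b])"
    using simple_graph_edge_in_vertices[OF assms \<open>{a, b} \<in> E\<close>] \<open>{a, b} \<in> E\<close>
    by (intro walk_snoc) auto
  moreover have "hd (xs @ [b]) = u" using xs by (simp add: walk_def)
  ultimately show "b \<in> reachable V E u"
    unfolding reachable_def by force
qed

lemma self_reachable: "u \<in> V \<Longrightarrow> u \<in> reachable V E u"
  unfolding reachable_def walk_def by (intro CollectI exI[of _ "[u]"]) simp

lemma proper_subgraph_induced:
  assumes "simple_graph V E" "S \<subseteq> V" "v \<in> V" "v \<notin> S"
  shows "proper_subgraph S (induced_edges S E) V E"
  using assms simple_graph_induced[OF assms(1,2)]
  unfolding proper_subgraph_def induced_edges_def by auto

theorem lemma2p4:
  fixes V :: "'a set" and E :: "'a set set"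
  assumes "simple_graph V E"
    and "chi_rho_critical V E"
  shows "connected_graph V E"
proof (rule ccontr)
  assume "\<not> connected_graph V E"
  then obtain u v where uv: "u \<in> V" "v \<in> V" "v \<notin> reachable V E u"
    unfolding connected_graph_def reachable_def by blast
  define S where "S = reachable V E u"
  have closed: "edge_closed V E S"
    unfolding S_def using edge_closed_reachable[OF assms(1)] .
  then have "S \<subseteq> V" unfolding edge_closed_def by simp
  moreover have "u \<in> S" "v \<notin> S" using uv self_reachable unfolding S_def by auto
  ultimately have "proper_subgraph S (induced_edges S E) V E"
    "proper_subgraph (V - S) (induced_edges (V - S) E) V E"
    using proper_subgraph_induced[OF assms(1)] uv by auto
  then have "max (packing_chromatic S (induced_edges S E))
      (packing_chromatic (V - S) (induced_edges (V - S) E)) < packing_chromatic V E"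
    using assms(2) unfolding chi_rho_critical_def by simp
  then show False
    using packing_chromatic_split_le[OF assms(1) closed] leD by blast
qed

end
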